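(* Let $\mathcal{H}$ be a supersolvable hyperplane arrangement of rank $n\geq 2$. Then the graph of regions $G(\mathcal{H})$ has a Hamiltonian cycle of even length.
   Context: A hyperplane arrangement in $\mathbb{R}^d$ is a finite set $\mathcal{H}$ of linear hyperplanes (hyperplanes through the origin). Its rank is the dimension of the span of the normal vectors of its hyperplanes. The regions of $\mathcal{H}$ are the connected components of $\mathbb{R}^d\setminus\bigcup_{H\in\mathcal{H}}H$. The graph of regions $G(\mathcal{H})$ has the regions as vertices, two regions being adjacent if and only if they are separated by exactly one hyperplane of $\mathcal{H}$. Supersolvability is defined recursively on the rank: an arrangement $\mathcal{H}$ of rank $n$ is supersolvable if either $n\leq 2$, or $n\geq 3$ and $\mathcal{H}$ is the disjoint union of two nonempty arrangements $\mathcal{H}_0$ and $\mathcal{H}_1$, where $\mathcal{H}_0$ is a supersolvable arrangement of rank $n-1$, and for any two distinct hyperplanes $H',H''\in\mathcal{H}_1$ there exists $H\in\mathcal{H}_0$ with $H'\cap H''\subseteq H$. *)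

theory Defs
  imports "HOL-Analysis.Analysis"
begin

definition linear_hyperplane :: "'a::euclidean_space set \<Rightarrow> bool" where
  "linear_hyperplane H \<longleftrightarrow> (\<exists>a. a \<noteq> 0 \<and> H = {x. a \<bullet> x = 0})"

definition arrangement :: "'a::euclidean_space set set \<Rightarrow> bool" where
  "arrangement \<A> \<longleftrightarrow> finite \<A> \<and> (\<forall>H\<in>\<A>. linear_hyperplane H)"

definition arr_rank :: "'a::euclidean_space set set \<Rightarrow> nat" where
  "arr_rank \<A> = dim {a. a \<noteq> 0 \<and> {x. a \<bullet> x = 0} \<in> \<A>}"

definition regions :: "'a::euclidean_space set set \<Rightarrow> 'a set set" where
  "regions \<A> = components (- \<Union>\<A>)"

definition separates :: "'a::euclidean_space set \<Rightarrow> 'a set \<Rightarrow> 'a set \<Rightarrow> bool" where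
  "separates H R1 R2 \<longleftrightarrow> \<not> (\<exists>C\<in>components (- H). R1 \<subseteq> C \<and> R2 \<subseteq> C)"

definition region_adj :: "'a::euclidean_space set set \<Rightarrow> 'a set \<Rightarrow> 'a set \<Rightarrow> bool" where
  "region_adj \<A> R1 R2 \<longleftrightarrow> R1 \<in> regions \<A> \<and> R2 \<in> regions \<A> \<and>
     card {H\<in>\<A>. separates H R1 R2} = 1"

text \<open>Its length is the number of edges
  = number of vertices.\<close>
definition hamiltonian_cycle :: "'a::euclidean_space set set \<Rightarrow> 'a set list \<Rightarrow> bool" where
  "hamiltonian_cycle \<A> cs \<longleftrightarrow> distinct cs \<and> set cs = regions \<A> \<and> length cs \<ge> 3 \<and>
     (\<forall>i < length cs. region_adj \<A> (cs ! i) (cs ! ((i + 1) mod length cs)))"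

inductive supersolvable :: "'a::euclidean_space set set \<Rightarrow> bool" where
  base: "arrangement \<A> \<Longrightarrow> arr_rank \<A> \<le> 2 \<Longrightarrow> supersolvable \<A>"
| step: "arrangement \<A> \<Longrightarrow> arr_rank \<A> \<ge> 3 \<Longrightarrow>
         \<A> = \<A>0 \<union> \<A>1 \<Longrightarrow> \<A>0 \<inter> \<A>1 = {} \<Longrightarrow> \<A>0 \<noteq> {} \<Longrightarrow> \<A>1 \<noteq> {} \<Longrightarrow>
         supersolvable \<A>0 \<Longrightarrow> arr_rank \<A>0 = arr_rank \<A> - 1 \<Longrightarrow>
         (\<forall>H'\<in>\<A>1. \<forall>H''\<in>\<A>1. H' \<noteq> H'' \<longrightarrow> (\<exists>H\<in>\<A>0. H' \<inter> H'' \<subseteq> H)) \<Longrightarrow>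
         supersolvable \<A>"

end

theory Submission
  imports Defs
begin

text \<open>
  The proof inducts along the supersolvable chain. Write \<open>\<A> = \<A>0 \<union> \<A>1\<close> with \<open>\<A>1\<close> modular over
  \<open>\<A>0\<close> and rank dropping by one. There is a vector \<open>v\<close> orthogonal to all normals of \<open>\<A>0\<close>, and the
  normals of \<open>\<A>1\<close> can be scaled so that each has inner product 1 with \<open>v\<close>. By modularity, on a region
  \<open>C\<close> of \<open>\<A>0\<close> no two linear forms of \<open>\<A>1\<close> ever agree. So the hyperplanes of \<open>\<A>1\<close> cut \<open>C\<close>
  in a fixed order, and the regions of \<open>\<A>\<close> inside \<open>C\<close> form a path \<open>C\<^sub>0, \<dots>, C\<^sub>m\<close>,
  \<open>m = |\<A>1|\<close>, where \<open>C\<^sub>j\<close> lies on the positive side of exactly \<open>j\<close> of them. Bottom and top levels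
  of adjacent regions of \<open>\<A>0\<close> are adjacent in \<open>\<A>\<close>. Hence walking along an even Hamiltonian cycle of
  \<open>\<A>0\<close> and running through the columns alternately upwards and downwards gives an even
  Hamiltonian cycle of \<open>\<A>\<close>, \<open>m + 1\<close> times as long. Rank two is the case \<open>\<A>0 = {H0}\<close>, whose two
  half-spaces form a cycle of length two.
\<close>

section \<open>Thresholds and boustrophedon walks\<close>

lemma exists_threshold_count_above:
  fixes V :: "'a::{dense_linorder, no_top} set"
  assumes "finite V" and "\<forall>v\<in>V. a < v" and "j \<le> card V"
  shows "\<exists>t. a < t \<and> t \<notin> V \<and> card {v\<in>V. v < t} = j"
  using assms
proof (induction V arbitrary: a j rule: finite_linorder_min_induct)
  case empty
  then show ?case using gt_ex by auto
next
  case (insert b V)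
  show ?case
  proof (cases j)
    case 0
    obtain t where t: "a < t" "t < b"
      using dense insert.prems(1) by blast
    then have "{v \<in> insert b V. v < t} = {}"
      using insert.hyps(2) by force
    moreover have "t \<notin> insert b V"
      using t insert.hyps(2) by fastforce
    ultimately show ?thesis
      using t(1) 0 by (metis card.empty)
  next
    case (Suc j')
    have "b \<notin> V" using insert.hyps(2) by blast
    then have "j' \<le> card V" using insert.prems(2) insert.hyps(1) Suc by simp
    then obtain t where t: "b < t" "t \<notin> V" "card {v\<in>V. v < t} = j'"
      using insert.IH[of b j'] insert.hyps(2) by blast
    have "{v \<in> insert b V. v < t} = insert b {v\<in>V. v < t}"
      using t(1) by auto
    then have "card {v \<in> insert b V. v < t} = j"
      using t(3) Suc \<open>b \<notin> V\<close> insert.hyps(1) by simp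
    moreover have "a < t"
      using insert.prems(1) t(1) by force
    ultimately show ?thesis
      using t(1,2) by (intro exI[of _ t]) auto
  qed
qed

lemma exists_threshold_count:
  fixes V :: "'a::{dense_linorder, no_top, no_bot} set"
  assumes "finite V" and "j \<le> card V"
  obtains t where "t \<notin> V" and "card {v\<in>V. v < t} = j"
proof -
  obtain a where "\<forall>v\<in>V. a < v"
  proof (cases "V = {}")
    case False
    obtain a where "a < Min V"
      using lt_ex by blast
    then show thesis
      using that Min_le[OF assms(1)] by (meson order.strict_trans2)
  qed (use that in simp)
  then show thesis
    using exists_threshold_count_above[OF assms(1) _ assms(2)] that by blast
qed

text \<open>Position \<open>p\<close> of the walk through the grid \<open>{..<m} \<times> {..k}\<close> that runs up the even rows
  and down the odd ones.\<close>
definition boustrophedon :: "nat \<Rightarrow> nat \<Rightarrow> nat \<times> nat" where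
  "boustrophedon k p =
     (p div Suc k, if even (p div Suc k) then p mod Suc k else k - p mod Suc k)"

lemma boustrophedon_row:
  assumes "r \<le> k"
  shows "boustrophedon k (i * Suc k + r) = (i, if even i then r else k - r)"
proof -
  have "(i * K + r) div K = i \<and> (i * K + r) mod K = r" if "r < K" for K
    using that by auto
  then show ?thesis
    using assms unfolding boustrophedon_def by (metis less_Suc_eq_le)
qed

lemma row_index_less:
  fixes i m r k :: nat
  assumes "i < m" and "r \<le> k"
  shows "i * Suc k + r < m * Suc k"
proof -
  have "i * Suc k + r < Suc i * Suc k" using assms(2) by simp
  also have "\<dots> \<le> m * Suc k" using assms(1) by (intro mult_le_mono1) simp
  finally show ?thesis .
qed

lemma boustrophedon_bij: "bij_betw (boustrophedon k) {..<m * Suc k} ({..<m} \<times> {..k})"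
proof (rule bij_betw_byWitness)
  define unfold where "unfold = (\<lambda>(i, j). i * Suc k + (if even i then j else k - j))"
  have mod_le: "p mod Suc k \<le> k" for p
    using mod_less_divisor[of "Suc k" p] by linarith
  show "\<forall>p\<in>{..<m * Suc k}. unfold (boustrophedon k p) = p"
    unfolding unfold_def boustrophedon_def using mod_le div_mult_mod_eq[of _ "Suc k"] by auto
  show "\<forall>ij\<in>{..<m} \<times> {..k}. boustrophedon k (unfold ij) = ij"
    unfolding unfold_def using boustrophedon_row by auto
  show "boustrophedon k ` {..<m * Suc k} \<subseteq> {..<m} \<times> {..k}"
    unfolding boustrophedon_def using mod_le by (auto simp: less_mult_imp_div_less)
  show "unfold ` ({..<m} \<times> {..k}) \<subseteq> {..<m * Suc k}"
    unfolding unfold_def using row_index_less by auto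
qed

lemma boustrophedon_Suc:
  assumes ij: "boustrophedon k p = (i, j)" and ij': "boustrophedon k (Suc p) = (i', j')"
  shows "i' = i \<and> (j' = Suc j \<or> j = Suc j') \<or> i' = Suc i \<and> j' = j \<and> (j = 0 \<or> j = k)"
proof -
  define r where "r = p mod Suc k"
  have i: "i = p div Suc k" and j: "j = (if even i then r else k - r)"
    using ij unfolding boustrophedon_def r_def by auto
  have p_eq: "p = i * Suc k + r"
    unfolding i r_def by (rule div_mult_mod_eq[symmetric])
  show ?thesis
  proof (cases "r < k")
    case True
    then have "i' = i \<and> j' = (if even i then Suc r else k - Suc r)"
      using ij' boustrophedon_row[of "Suc r" k i] p_eq by simp
    then show ?thesis
      using j True by auto
  next
    case False
    then have r: "r = k"
      using mod_less_divisor[of "Suc k" p] unfolding r_def by linarith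
    then have Suc_p: "Suc p = Suc i * Suc k"
      using p_eq by simp
    then have "i' = Suc i \<and> j' = (if even i then k else 0)"
      using ij' boustrophedon_row[of 0 k "Suc i"] unfolding Suc_p by simp
    then show ?thesis
      using j r by auto
  qed
qed

lemma boustrophedon_step:
  assumes m: "even m" and p: "p < m * Suc k"
    and ij: "boustrophedon k p = (i, j)"
    and ij': "boustrophedon k (Suc p mod (m * Suc k)) = (i', j')"
  shows "i' = i \<and> (j' = Suc j \<or> j = Suc j') \<or> i' = Suc i mod m \<and> j' = j \<and> (j = 0 \<or> j = k)"
proof (cases "Suc p < m * Suc k")
  case True
  then have "i' < m"
    using bij_betw_apply[OF boustrophedon_bij True[folded lessThan_iff]] ij' by auto
  then show ?thesis
    using boustrophedon_Suc[OF ij] ij' True by auto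
next
  case False
  then have "Suc p = m * Suc k"
    using p by simp
  then have "i' = 0 \<and> j' = 0"
    using ij' unfolding boustrophedon_def by simp
  obtain m' where m': "m = Suc m'"
    using p by (cases m) auto
  then have "p = m' * Suc k + k"
    using \<open>Suc p = m * Suc k\<close> by simp
  moreover have "odd m'"
    using m m' by simp
  ultimately have "i = m' \<and> j = 0"
    using ij boustrophedon_row[of k k m'] by simp
  then show ?thesis
    using \<open>i' = 0 \<and> j' = 0\<close> m' by simp
qed

definition cyclic_path :: "('b \<Rightarrow> 'b \<Rightarrow> bool) \<Rightarrow> 'b list \<Rightarrow> bool" where
  "cyclic_path adj cs \<longleftrightarrow> (\<forall>i<length cs. adj (cs ! i) (cs ! (Suc i mod length cs)))"

definition snake :: "'c list \<Rightarrow> nat \<Rightarrow> ('c \<Rightarrow> nat \<Rightarrow> 'b) \<Rightarrow> 'b list" where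
  "snake cs k R = map ((\<lambda>(i, j). R (cs ! i) j) \<circ> boustrophedon k) [0..<length cs * Suc k]"

lemma length_snake: "length (snake cs k R) = length cs * Suc k"
  unfolding snake_def by simp

lemma set_snake: "set (snake cs k R) = {R C j | C j. C \<in> set cs \<and> j \<le> k}"
proof -
  have "set (snake cs k R) = (\<lambda>(i, j). R (cs ! i) j) ` boustrophedon k ` {..<length cs * Suc k}"
    unfolding snake_def by (simp only: set_map image_comp set_upt atLeast0LessThan)
  also have "\<dots> = (\<lambda>(i, j). R (cs ! i) j) ` ({..<length cs} \<times> {..k})"
    by (simp only: bij_betw_imp_surj_on[OF boustrophedon_bij])
  also have "\<dots> = {R C j | C j. C \<in> set cs \<and> j \<le> k}"
    by (auto simp: in_set_conv_nth)
  finally show ?thesis .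
qed

lemma distinct_snake:
  assumes "distinct cs"
    and inj: "\<And>C C' j j'. C \<in> set cs \<Longrightarrow> C' \<in> set cs \<Longrightarrow> j \<le> k \<Longrightarrow> j' \<le> k \<Longrightarrow>
      R C j = R C' j' \<Longrightarrow> C = C' \<and> j = j'"
  shows "distinct (snake cs k R)"
proof -
  have "inj_on (\<lambda>(i, j). R (cs ! i) j) ({..<length cs} \<times> {..k})"
  proof (rule inj_onI, clarify)
    fix i j i' j'
    assume "i < length cs" "j \<le> k" "i' < length cs" "j' \<le> k" "R (cs ! i) j = R (cs ! i') j'"
    then show "i = i' \<and> j = j'"
      using inj[of "cs ! i" "cs ! i'" j j'] nth_eq_iff_index_eq[OF assms(1)] by auto
  qed
  then have "inj_on ((\<lambda>(i, j). R (cs ! i) j) \<circ> boustrophedon k) {..<length cs * Suc k}"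
    using comp_inj_on[OF bij_betw_imp_inj_on[OF boustrophedon_bij]]
      bij_betw_imp_surj_on[OF boustrophedon_bij] by metis
  then show ?thesis
    unfolding snake_def by (simp add: distinct_map atLeast0LessThan)
qed

lemma nth_snake:
  assumes "p < length cs * Suc k" and "boustrophedon k p = (i, j)"
  shows "snake cs k R ! p = R (cs ! i) j"
  using assms unfolding snake_def by simp

lemma cyclic_path_snake:
  assumes cyc: "cyclic_path adj0 cs" and even: "even (length cs)"
    and column: "\<And>C j. C \<in> set cs \<Longrightarrow> j < k \<Longrightarrow> adj (R C j) (R C (Suc j)) \<and> adj (R C (Suc j)) (R C j)"
    and ends: "\<And>C C' j. C \<in> set cs \<Longrightarrow> C' \<in> set cs \<Longrightarrow> adj0 C C' \<Longrightarrow> j = 0 \<or> j = k \<Longrightarrow>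
      adj (R C j) (R C' j)"
  shows "cyclic_path adj (snake cs k R)"
  unfolding cyclic_path_def length_snake
proof (intro allI impI)
  let ?N = "length cs * Suc k"
  fix p assume p: "p < ?N"
  obtain i j where ij: "boustrophedon k p = (i, j)"
    by fastforce
  obtain i' j' where ij': "boustrophedon k (Suc p mod ?N) = (i', j')"
    by fastforce
  have p': "Suc p mod ?N < ?N"
    using p by (intro mod_less_divisor) linarith
  have bounds: "i < length cs" "j \<le> k" "i' < length cs" "j' \<le> k"
    using bij_betw_apply[OF boustrophedon_bij p[folded lessThan_iff]]
      bij_betw_apply[OF boustrophedon_bij p'[folded lessThan_iff]] ij ij' by auto
  have C: "cs ! i \<in> set cs" "cs ! i' \<in> set cs"
    using bounds by auto
  consider "i' = i" "j' = Suc j" | "i' = i" "j = Suc j'" | "i' = Suc i mod length cs" "j' = j" "j = 0 \<or> j = k"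
    using boustrophedon_step[OF even p ij ij'] by blast
  then have "adj (R (cs ! i) j) (R (cs ! i') j')"
  proof cases
    case 3
    have "adj0 (cs ! i) (cs ! i')"
      using cyc bounds(1) unfolding cyclic_path_def 3(1) by blast
    then show ?thesis
      using ends C 3 by blast
  qed (use column C bounds in auto)
  then show "adj (snake cs k R ! p) (snake cs k R ! (Suc p mod ?N))"
    by (simp only: nth_snake[OF p ij] nth_snake[OF p' ij'])
qed

section \<open>Regions and sign vectors\<close>

definition normal_field :: "('a::euclidean_space set \<Rightarrow> 'a) \<Rightarrow> 'a set set \<Rightarrow> bool" where
  "normal_field nr A \<longleftrightarrow> (\<forall>H\<in>A. nr H \<noteq> 0 \<and> H = {x. nr H \<bullet> x = 0})"

definition positive_sides :: "('a::euclidean_space set \<Rightarrow> 'a) \<Rightarrow> 'a set set \<Rightarrow> 'a \<Rightarrow> 'a set set" where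
  "positive_sides nr A x = {H\<in>A. 0 < nr H \<bullet> x}"

definition separating :: "('a::euclidean_space set \<Rightarrow> 'a) \<Rightarrow> 'a set set \<Rightarrow> 'a \<Rightarrow> 'a \<Rightarrow> 'a set set" where
  "separating nr A x y = {H\<in>A. (0 < nr H \<bullet> x) \<noteq> (0 < nr H \<bullet> y)}"

definition region_of :: "'a::euclidean_space set set \<Rightarrow> 'a \<Rightarrow> 'a set" where
  "region_of A x = connected_component_set (- \<Union>A) x"

lemma normal_field_mem_iff: "normal_field nr A \<Longrightarrow> H \<in> A \<Longrightarrow> x \<in> H \<longleftrightarrow> nr H \<bullet> x = 0"
  unfolding normal_field_def by blast

lemma normal_field_subset: "normal_field nr A \<Longrightarrow> B \<subseteq> A \<Longrightarrow> normal_field nr B"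
  unfolding normal_field_def by blast

lemma normal_field_scaleR:
  assumes "normal_field nr A" and "\<And>H. H \<in> A \<Longrightarrow> c H \<noteq> 0"
  shows "normal_field (\<lambda>H. c H *\<^sub>R nr H) A"
  using assms unfolding normal_field_def by auto

lemma arrangement_normal_field:
  assumes "arrangement A"
  obtains nr where "normal_field nr A"
proof -
  have "\<forall>H\<in>A. \<exists>a. a \<noteq> 0 \<and> H = {x. a \<bullet> x = 0}"
    using assms unfolding arrangement_def linear_hyperplane_def by blast
  then show thesis
    using that unfolding normal_field_def by metis
qed

lemma notin_Union_iff: "normal_field nr A \<Longrightarrow> x \<notin> \<Union>A \<longleftrightarrow> (\<forall>H\<in>A. nr H \<bullet> x \<noteq> 0)"
  unfolding normal_field_def by blast

lemma positive_sides_subset: "positive_sides nr A x \<subseteq> A"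
  unfolding positive_sides_def by blast

lemma positive_sides_Un:
  "positive_sides nr (A \<union> B) x = positive_sides nr A x \<union> positive_sides nr B x"
  unfolding positive_sides_def by auto

lemma separating_Un: "separating nr (A \<union> B) x y = separating nr A x y \<union> separating nr B x y"
  unfolding separating_def by auto

lemma separating_eq_sym_diff:
  "separating nr A x y = sym_diff (positive_sides nr A x) (positive_sides nr A y)"
  unfolding separating_def positive_sides_def by auto

lemma connected_same_side:
  fixes a :: "'a::euclidean_space"
  assumes "connected S" and "x \<in> S" and "y \<in> S" and "\<forall>z\<in>S. a \<bullet> z \<noteq> 0"
  shows "0 < a \<bullet> x \<longleftrightarrow> 0 < a \<bullet> y"
  using connected_ivt_hyperplane[OF assms(1,2,3), of a 0] connected_ivt_hyperplane[OF assms(1,3,2), of a 0]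
    assms(2-4) by force

lemma same_sign_iff_mult_pos:
  fixes a b :: real
  assumes "a \<noteq> 0"
  shows "b \<noteq> 0 \<and> (0 < b \<longleftrightarrow> 0 < a) \<longleftrightarrow> 0 < a * b"
  using assms by (auto simp: zero_less_mult_iff)

lemma convex_sign_cell:
  assumes nr: "normal_field nr A" and x: "x \<notin> \<Union>A"
  shows "convex {z. z \<notin> \<Union>A \<and> positive_sides nr A z = positive_sides nr A x}"
proof -
  have "z \<notin> \<Union>A \<and> positive_sides nr A z = positive_sides nr A x \<longleftrightarrow>
      (\<forall>H\<in>A. 0 < (nr H \<bullet> x) * (nr H \<bullet> z))" for z
  proof -
    have "z \<notin> \<Union>A \<and> positive_sides nr A z = positive_sides nr A x \<longleftrightarrow>
        (\<forall>H\<in>A. nr H \<bullet> z \<noteq> 0 \<and> (0 < nr H \<bullet> z \<longleftrightarrow> 0 < nr H \<bullet> x))"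
      unfolding notin_Union_iff[OF nr] positive_sides_def by blast
    also have "\<dots> \<longleftrightarrow> (\<forall>H\<in>A. 0 < (nr H \<bullet> x) * (nr H \<bullet> z))"
      using x same_sign_iff_mult_pos unfolding notin_Union_iff[OF nr] by blast
    finally show ?thesis .
  qed
  then have "{z. z \<notin> \<Union>A \<and> positive_sides nr A z = positive_sides nr A x} =
      (\<Inter>H\<in>A. {z. 0 < ((nr H \<bullet> x) *\<^sub>R nr H) \<bullet> z})"
    by auto
  moreover have "convex (\<Inter>H\<in>A. {z. 0 < ((nr H \<bullet> x) *\<^sub>R nr H) \<bullet> z})"
    by (intro convex_INT convex_halfspace_gt)
  ultimately show ?thesis
    by simp
qed

lemma region_of_self: "x \<notin> \<Union>A \<Longrightarrow> x \<in> region_of A x"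
  unfolding region_of_def by simp

lemma regions_eq_image_region_of: "regions A = region_of A ` (- \<Union>A)"
  unfolding regions_def region_of_def components_def by simp

lemma region_of_in_regions: "x \<notin> \<Union>A \<Longrightarrow> region_of A x \<in> regions A"
  unfolding regions_eq_image_region_of by simp

lemma region_of_eq_if_mem: "C \<in> regions A \<Longrightarrow> y \<in> C \<Longrightarrow> region_of A y = C"
  unfolding regions_def region_of_def components_def using connected_component_eq by blast

lemma region_of_eq_sign_cell:
  assumes nr: "normal_field nr A" and x: "x \<notin> \<Union>A"
  shows "region_of A x = {z. z \<notin> \<Union>A \<and> positive_sides nr A z = positive_sides nr A x}"
proof
  show "{z. z \<notin> \<Union>A \<and> positive_sides nr A z = positive_sides nr A x} \<subseteq> region_of A x"
    unfolding region_of_def using x convex_sign_cell[OF nr x]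
    by (intro connected_component_maximal) (auto simp: convex_connected)
next
  let ?C = "region_of A x"
  have C: "connected ?C" "?C \<subseteq> - \<Union>A" "x \<in> ?C"
    unfolding region_of_def using x connected_component_subset[of "- \<Union>A" x] by auto
  show "?C \<subseteq> {z. z \<notin> \<Union>A \<and> positive_sides nr A z = positive_sides nr A x}"
  proof
    fix z assume z: "z \<in> ?C"
    have "0 < nr H \<bullet> z \<longleftrightarrow> 0 < nr H \<bullet> x" if "H \<in> A" for H
      using connected_same_side[OF C(1) z C(3), of "nr H"] C(2) normal_field_mem_iff[OF nr that] that
      by blast
    then show "z \<in> {z. z \<notin> \<Union>A \<and> positive_sides nr A z = positive_sides nr A x}"
      using z C(2) unfolding positive_sides_def by auto
  qed
qed

lemma mem_region_of_iff:
  assumes "normal_field nr A" and "x \<notin> \<Union>A"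
  shows "z \<in> region_of A x \<longleftrightarrow> z \<notin> \<Union>A \<and> positive_sides nr A z = positive_sides nr A x"
  using region_of_eq_sign_cell[OF assms] by blast

lemma region_of_eq_iff:
  assumes "normal_field nr A" and "x \<notin> \<Union>A" and "y \<notin> \<Union>A"
  shows "region_of A x = region_of A y \<longleftrightarrow> positive_sides nr A x = positive_sides nr A y"
  using region_of_eq_sign_cell[OF assms(1,2)] region_of_eq_sign_cell[OF assms(1,3)] assms(2,3)
  by blast

lemma separates_region_of_iff:
  assumes nr: "normal_field nr A" and H: "H \<in> A" and x: "x \<notin> \<Union>A" and y: "y \<notin> \<Union>A"
  shows "separates H (region_of A x) (region_of A y) \<longleftrightarrow> (0 < nr H \<bullet> x) \<noteq> (0 < nr H \<bullet> y)"
proof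
  assume sep: "separates H (region_of A x) (region_of A y)"
  show "(0 < nr H \<bullet> x) \<noteq> (0 < nr H \<bullet> y)"
  proof
    assume same: "(0 < nr H \<bullet> x) = (0 < nr H \<bullet> y)"
    have nrH: "normal_field nr {H}"
      using normal_field_subset[OF nr] H by blast
    have "y \<in> region_of {H} x"
      using mem_region_of_iff[OF nrH] x y H same unfolding positive_sides_def by auto
    then have same_comp: "region_of {H} y = region_of {H} x"
      unfolding region_of_def by (rule connected_component_eq)
    have "region_of A w \<subseteq> region_of {H} w" for w
      unfolding region_of_def using H by (intro connected_component_mono) auto
    moreover have "region_of {H} x \<in> components (- H)"
      unfolding region_of_def components_def using x H by auto
    ultimately show False
      using sep same_comp unfolding separates_def by metis
  qed
next
  assume diff: "(0 < nr H \<bullet> x) \<noteq> (0 < nr H \<bullet> y)"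
  show "separates H (region_of A x) (region_of A y)"
    unfolding separates_def
  proof
    assume "\<exists>C\<in>components (- H). region_of A x \<subseteq> C \<and> region_of A y \<subseteq> C"
    then obtain C where C: "C \<in> components (- H)" "region_of A x \<subseteq> C" "region_of A y \<subseteq> C"
      by blast
    have "\<forall>z\<in>C. nr H \<bullet> z \<noteq> 0"
      using in_components_subset[OF C(1)] normal_field_mem_iff[OF nr H] by blast
    then show False
      using connected_same_side[OF in_components_connected[OF C(1)], of x y "nr H"]
        C(2,3) region_of_self x y diff by blast
  qed
qed

lemma region_adj_region_of_iff:
  assumes "normal_field nr A" and "x \<notin> \<Union>A" and "y \<notin> \<Union>A"
  shows "region_adj A (region_of A x) (region_of A y) \<longleftrightarrow> card (separating nr A x y) = 1"
proof -
  have "{H\<in>A. separates H (region_of A x) (region_of A y)} = separating nr A x y"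
    using separates_region_of_iff[OF assms(1) _ assms(2,3)] unfolding separating_def by blast
  then show ?thesis
    using region_of_in_regions[OF assms(2)] region_of_in_regions[OF assms(3)]
    unfolding region_adj_def by simp
qed

lemma region_adj_sym:
  assumes "region_adj A R S"
  shows "region_adj A S R"
proof -
  have "{H\<in>A. separates H S R} = {H\<in>A. separates H R S}"
    unfolding separates_def by blast
  then show ?thesis
    using assms unfolding region_adj_def by simp
qed

section \<open>Normals and rank\<close>

lemma in_span_if_orthogonal:
  fixes c :: "'a::euclidean_space"
  assumes "\<And>x. \<forall>a\<in>S. a \<bullet> x = 0 \<Longrightarrow> c \<bullet> x = 0"
  shows "c \<in> span S"
proof -
  obtain y z where y: "y \<in> span S" and z: "\<And>w. w \<in> span S \<Longrightarrow> orthogonal z w" and c: "c = y + z"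
    using orthogonal_subspace_decomp_exists[of S c] by metis
  have "a \<bullet> z = 0" if "a \<in> S" for a
    using z[OF span_base[OF that]] unfolding orthogonal_def by (simp add: inner_commute)
  then have "c \<bullet> z = 0"
    using assms by blast
  moreover have "y \<bullet> z = 0"
    using z[OF y] unfolding orthogonal_def by (simp add: inner_commute)
  ultimately have "z = 0"
    unfolding c by (simp add: inner_add_left)
  then show ?thesis
    using c y by simp
qed

lemma normal_field_eq_if_parallel:
  assumes nr: "normal_field nr A" and "H \<in> A" and "H' \<in> A" and "nr H' \<in> span {nr H}"
  shows "H' = H"
proof -
  obtain k where k: "nr H' = k *\<^sub>R nr H"
    using assms(4) unfolding span_singleton by auto
  then have "k \<noteq> 0"
    using nr assms(3) unfolding normal_field_def by auto
  then have "{x. nr H' \<bullet> x = 0} = {x. nr H \<bullet> x = 0}"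
    unfolding k by simp
  then show ?thesis
    using nr assms(2,3) unfolding normal_field_def by auto
qed

lemma arr_rank_eq_dim_normals:
  assumes nr: "normal_field nr A"
  shows "arr_rank A = dim (nr ` A)"
proof -
  let ?N = "{a. a \<noteq> 0 \<and> {x. a \<bullet> x = 0} \<in> A}"
  have "a \<in> span (nr ` A)" if "a \<in> ?N" for a
  proof -
    define H where "H = {x. a \<bullet> x = 0}"
    have "H \<in> A"
      using that unfolding H_def by simp
    then have "a \<in> span {nr H}"
      using normal_field_mem_iff[OF nr] by (intro in_span_if_orthogonal) (auto simp: H_def)
    then show ?thesis
      using \<open>H \<in> A\<close> span_mono[of "{nr H}" "nr ` A"] by blast
  qed
  moreover have "nr ` A \<subseteq> ?N"
    using nr unfolding normal_field_def by auto
  ultimately have "span ?N = span (nr ` A)"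
    unfolding span_eq by (auto intro: span_base)
  then show ?thesis
    unfolding arr_rank_def by (rule span_eq_dim)
qed

lemma modular_inner_nonzero:
  assumes nr: "normal_field nr (A0 \<union> A1)" and disjoint: "A0 \<inter> A1 = {}"
    and modular: "\<forall>H\<in>A1. \<forall>H'\<in>A1. H \<noteq> H' \<longrightarrow> (\<exists>H0\<in>A0. H \<inter> H' \<subseteq> H0)"
    and v0: "\<forall>H\<in>A0. nr H \<bullet> v = 0"
    and H1: "H1 \<in> A1" "nr H1 \<bullet> v \<noteq> 0" and H: "H \<in> A1"
  shows "nr H \<bullet> v \<noteq> 0"
proof
  assume Hv: "nr H \<bullet> v = 0"
  then have "H \<noteq> H1"
    using H1(2) by blast
  then obtain H0 where H0: "H0 \<in> A0" "H \<inter> H1 \<subseteq> H0"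
    using modular H H1(1) by blast
  have "nr H0 \<in> span {nr H, nr H1}"
  proof (rule in_span_if_orthogonal)
    fix x assume "\<forall>a\<in>{nr H, nr H1}. a \<bullet> x = 0"
    then have "x \<in> H \<inter> H1"
      using normal_field_mem_iff[OF nr] H H1(1) by auto
    then show "nr H0 \<bullet> x = 0"
      using H0 normal_field_mem_iff[OF nr, of H0] by blast
  qed
  then obtain c b where cb: "nr H0 - c *\<^sub>R nr H = b *\<^sub>R nr H1"
    unfolding span_breakdown_eq span_singleton by auto
  have "b * (nr H1 \<bullet> v) = 0"
    using arg_cong[OF cb, of "\<lambda>x. x \<bullet> v"] v0 H0(1) Hv by (simp add: inner_diff_left)
  then have "nr H0 = c *\<^sub>R nr H"
    using cb H1(2) by simp
  then have "nr H0 \<in> span {nr H}"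
    by (simp add: span_base span_scale)
  then have "H0 = H"
    using normal_field_eq_if_parallel[OF nr] H0(1) H by blast
  then show False
    using disjoint H0(1) H by blast
qed

lemma exists_transversal:
  assumes nr: "normal_field nr (A0 \<union> A1)" and disjoint: "A0 \<inter> A1 = {}"
    and modular: "\<forall>H\<in>A1. \<forall>H'\<in>A1. H \<noteq> H' \<longrightarrow> (\<exists>H0\<in>A0. H \<inter> H' \<subseteq> H0)"
    and rank: "arr_rank A0 < arr_rank (A0 \<union> A1)"
  obtains v where "\<forall>H\<in>A0. nr H \<bullet> v = 0" and "\<forall>H\<in>A1. nr H \<bullet> v \<noteq> 0"
proof -
  have nr0: "normal_field nr A0"
    using normal_field_subset[OF nr] by blast
  have "\<not> nr ` (A0 \<union> A1) \<subseteq> span (nr ` A0)"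
  proof
    assume "nr ` (A0 \<union> A1) \<subseteq> span (nr ` A0)"
    then have "dim (nr ` (A0 \<union> A1)) \<le> dim (nr ` A0)"
      using dim_subset dim_span by metis
    then show False
      using rank arr_rank_eq_dim_normals[OF nr] arr_rank_eq_dim_normals[OF nr0] by simp
  qed
  then obtain H1 where H1: "H1 \<in> A0 \<union> A1" "nr H1 \<notin> span (nr ` A0)"
    by blast
  then have "H1 \<in> A1"
    using span_base[of "nr H1" "nr ` A0"] by blast
  obtain w v where w: "w \<in> span (nr ` A0)" and v: "\<And>x. x \<in> span (nr ` A0) \<Longrightarrow> orthogonal v x"
    and decomp: "nr H1 = w + v"
    using orthogonal_subspace_decomp_exists[of "nr ` A0" "nr H1"] by metis
  have v0: "nr H \<bullet> v = 0" if "H \<in> A0" for H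
    using v[OF span_base[OF imageI[OF that]]] unfolding orthogonal_def by (simp add: inner_commute)
  have "v \<noteq> 0"
    using decomp w H1(2) by force
  moreover have "w \<bullet> v = 0"
    using v[OF w] unfolding orthogonal_def by (simp add: inner_commute)
  ultimately have H1v: "nr H1 \<bullet> v \<noteq> 0"
    using decomp by (simp add: inner_add_left)
  moreover from v0 have "\<forall>H\<in>A0. nr H \<bullet> v = 0"
    by blast
  ultimately show thesis
    using that modular_inner_nonzero[OF nr disjoint modular _ \<open>H1 \<in> A1\<close>] by blast
qed

lemma rank_two_modular:
  assumes nr: "normal_field nr A" and rank: "arr_rank A = 2"
    and "H0 \<in> A" and "H \<in> A" and "H' \<in> A" and "H \<noteq> H'"
  shows "H \<inter> H' \<subseteq> H0"
proof -
  have "nr H' \<notin> span {nr H}"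
    using normal_field_eq_if_parallel[OF nr] assms(4-6) by blast
  moreover have "nr H \<noteq> 0"
    using nr assms(4) unfolding normal_field_def by blast
  ultimately have "independent {nr H', nr H}" and "nr H' \<noteq> nr H"
    using independent_insertI[of "nr H'" "{nr H}"] span_base[of "nr H" "{nr H}"] by auto
  moreover from this(2) have "card {nr H', nr H} = 2"
    by simp
  moreover have "{nr H', nr H} \<subseteq> nr ` A"
    using assms(4,5) by blast
  ultimately have "nr ` A \<subseteq> span {nr H', nr H}"
    using rank arr_rank_eq_dim_normals[OF nr] card_ge_dim_independent by (metis order_refl)
  then have "nr H0 \<in> span {nr H', nr H}"
    using assms(3) by blast
  show ?thesis
  proof
    fix x assume "x \<in> H \<inter> H'"
    then have "orthogonal x y" if "y \<in> {nr H', nr H}" for y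
      using that normal_field_mem_iff[OF nr] assms(4,5) unfolding orthogonal_def
      by (auto simp: inner_commute)
    then have "orthogonal x (nr H0)"
      using orthogonal_to_span[OF \<open>nr H0 \<in> span {nr H', nr H}\<close>] by blast
    then show "x \<in> H0"
      using normal_field_mem_iff[OF nr assms(3)] unfolding orthogonal_def by (simp add: inner_commute)
  qed
qed

section \<open>Adding a modular family of hyperplanes\<close>

text \<open>Unlike \<open>hamiltonian_cycle\<close>, a tour may have only two vertices, so that the two half-spaces
  of a single hyperplane form one.\<close>
definition even_tour :: "'a::euclidean_space set set \<Rightarrow> 'a set list \<Rightarrow> bool" where
  "even_tour A cs \<longleftrightarrow>
     distinct cs \<and> set cs = regions A \<and> even (length cs) \<and> cyclic_path (region_adj A) cs"

lemma hyperplane_even_tour: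
  assumes nr: "normal_field nr {H}"
  shows "even_tour {H} [region_of {H} (nr H), region_of {H} (- nr H)]"
proof -
  have "0 < nr H \<bullet> nr H"
    using nr unfolding normal_field_def by (simp add: inner_gt_zero_iff)
  then have off: "nr H \<notin> \<Union>{H}" "- nr H \<notin> \<Union>{H}"
    and sides: "positive_sides nr {H} (nr H) = {H}" "positive_sides nr {H} (- nr H) = {}"
    using normal_field_mem_iff[OF nr] unfolding positive_sides_def by (auto simp del: inner_gt_zero_iff)
  have "region_adj {H} (region_of {H} (nr H)) (region_of {H} (- nr H))"
    using sides by (simp add: region_adj_region_of_iff[OF nr off] separating_eq_sym_diff)
  moreover have "region_of {H} (nr H) \<noteq> region_of {H} (- nr H)"
    using sides by (simp add: region_of_eq_iff[OF nr off])
  moreover have "regions {H} = {region_of {H} (nr H), region_of {H} (- nr H)}"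
  proof
    show "regions {H} \<subseteq> {region_of {H} (nr H), region_of {H} (- nr H)}"
    proof
      fix R assume "R \<in> regions {H}"
      then obtain z where z: "z \<notin> \<Union>{H}" "R = region_of {H} z"
        unfolding regions_eq_image_region_of by auto
      have "positive_sides nr {H} z = {H} \<or> positive_sides nr {H} z = {}"
        unfolding positive_sides_def by auto
      then show "R \<in> {region_of {H} (nr H), region_of {H} (- nr H)}"
        using region_of_eq_iff[OF nr z(1) off(1)] region_of_eq_iff[OF nr z(1) off(2)] sides z(2)
        by auto
    qed
  qed (use off region_of_in_regions in blast)
  ultimately show ?thesis
    unfolding even_tour_def cyclic_path_def by (auto simp: less_Suc_eq region_adj_sym)
qed

locale modular_extension =
  fixes nr :: "'a::euclidean_space set \<Rightarrow> 'a" and A0 A1 :: "'a set set" and v :: 'a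
  assumes normal_field: "normal_field nr (A0 \<union> A1)"
    and finite: "finite A1"
    and disjoint: "A0 \<inter> A1 = {}"
    and transversal0: "\<And>H. H \<in> A0 \<Longrightarrow> nr H \<bullet> v = 0"
    and transversal1: "\<And>H. H \<in> A1 \<Longrightarrow> nr H \<bullet> v = 1"
    and modular: "\<And>H H'. H \<in> A1 \<Longrightarrow> H' \<in> A1 \<Longrightarrow> H \<noteq> H' \<Longrightarrow> \<exists>H0\<in>A0. H \<inter> H' \<subseteq> H0"
begin

lemma normal_field0: "normal_field nr A0"
  using normal_field_subset[OF normal_field] by blast

lemma normal_field1: "normal_field nr A1"
  using normal_field_subset[OF normal_field] by blast

lemma finite_positive_sides: "finite (positive_sides nr A1 z)"
  using finite unfolding positive_sides_def by simp

lemma inner_normals_distinct: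
  assumes C: "C \<in> regions A0" and z: "z \<in> C"
    and H: "H \<in> A1" and H': "H' \<in> A1" and "H \<noteq> H'"
  shows "nr H \<bullet> z \<noteq> nr H' \<bullet> z"
proof
  assume eq: "nr H \<bullet> z = nr H' \<bullet> z"
  \<comment> \<open>then \<open>z - (nr H \<bullet> z) *\<^sub>R v\<close> lies on \<open>H \<inter> H'\<close>, but on no hyperplane of \<open>A0\<close>\<close>
  obtain H0 where H0: "H0 \<in> A0" "H \<inter> H' \<subseteq> H0"
    using modular[OF H H' \<open>H \<noteq> H'\<close>] by blast
  define w where "w = z - (nr H \<bullet> z) *\<^sub>R v"
  have "w \<in> H \<inter> H'"
    using eq transversal1[OF H] transversal1[OF H'] normal_field_mem_iff[OF normal_field1] H H'
    unfolding w_def by (simp add: inner_diff_right)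
  then have "nr H0 \<bullet> w = 0"
    using H0 normal_field_mem_iff[OF normal_field0 H0(1)] by blast
  moreover have "nr H0 \<bullet> w = nr H0 \<bullet> z"
    using transversal0[OF H0(1)] unfolding w_def by (simp add: inner_diff_right)
  moreover have "z \<notin> H0"
    using C z H0(1) in_components_subset unfolding regions_def by blast
  ultimately show False
    using normal_field_mem_iff[OF normal_field0 H0(1)] by simp
qed

lemma positive_sides_chain:
  assumes C: "C \<in> regions A0" and y: "y \<in> C" and z: "z \<in> C"
  shows "positive_sides nr A1 y \<subseteq> positive_sides nr A1 z \<or>
    positive_sides nr A1 z \<subseteq> positive_sides nr A1 y"
proof (rule ccontr)
  assume "\<not> ?thesis"
  then obtain H H' where H: "H \<in> A1" "0 < nr H \<bullet> y" "\<not> 0 < nr H \<bullet> z"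
    and H': "H' \<in> A1" "0 < nr H' \<bullet> z" "\<not> 0 < nr H' \<bullet> y"
    unfolding positive_sides_def by blast
  then have "H \<noteq> H'"
    by blast
  have "\<forall>w\<in>C. (nr H' - nr H) \<bullet> w \<noteq> 0"
    using inner_normals_distinct[OF C _ H'(1) H(1)] \<open>H \<noteq> H'\<close> by (simp add: inner_diff_left)
  then have "0 < (nr H' - nr H) \<bullet> y \<longleftrightarrow> 0 < (nr H' - nr H) \<bullet> z"
    using connected_same_side[OF _ y z] C in_components_connected unfolding regions_def by blast
  then show False
    using H H' by (simp add: inner_diff_left)
qed

lemma positive_sides_subset_if_card_le:
  assumes "C \<in> regions A0" and "y \<in> C" and "z \<in> C"
    and "card (positive_sides nr A1 y) \<le> card (positive_sides nr A1 z)"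
  shows "positive_sides nr A1 y \<subseteq> positive_sides nr A1 z"
  using positive_sides_chain[OF assms(1-3)] card_seteq[OF finite_positive_sides] assms(4) by blast

text \<open>By \<open>positive_sides_chain\<close>, a region of the whole arrangement inside a region \<open>C\<close> of \<open>A0\<close> is
  determined by the number of hyperplanes of \<open>A1\<close> on whose positive side it lies.\<close>
definition level :: "'a set \<Rightarrow> nat \<Rightarrow> 'a set" where
  "level C j = {z \<in> C - \<Union>(A0 \<union> A1). card (positive_sides nr A1 z) = j}"

lemma region_of_eq_level:
  assumes C: "C \<in> regions A0" and y: "y \<in> C - \<Union>(A0 \<union> A1)"
  shows "region_of (A0 \<union> A1) y = level C (card (positive_sides nr A1 y))"
proof -
  have y0: "y \<notin> \<Union>A0" and y_off: "y \<notin> \<Union>(A0 \<union> A1)"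
    using y by blast+
  have C_eq: "C = region_of A0 y"
    using region_of_eq_if_mem[OF C] y by simp
  have same_card: "positive_sides nr A1 z = positive_sides nr A1 y \<longleftrightarrow>
      card (positive_sides nr A1 z) = card (positive_sides nr A1 y)" if "z \<in> C" for z
    using positive_sides_subset_if_card_le[OF C] y that by (metis Diff_iff order_refl subset_antisym)
  have "z \<in> region_of (A0 \<union> A1) y \<longleftrightarrow> z \<in> level C (card (positive_sides nr A1 y))" for z
  proof -
    have "z \<in> region_of (A0 \<union> A1) y \<longleftrightarrow>
        z \<notin> \<Union>(A0 \<union> A1) \<and> positive_sides nr (A0 \<union> A1) z = positive_sides nr (A0 \<union> A1) y"
      by (rule mem_region_of_iff[OF normal_field y_off])
    also have "\<dots> \<longleftrightarrow> z \<notin> \<Union>(A0 \<union> A1) \<and> positive_sides nr A0 z = positive_sides nr A0 y \<and>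
        positive_sides nr A1 z = positive_sides nr A1 y"
      using disjoint unfolding positive_sides_Un by (auto simp: positive_sides_def)
    also have "\<dots> \<longleftrightarrow> z \<notin> \<Union>(A0 \<union> A1) \<and> z \<in> C \<and> positive_sides nr A1 z = positive_sides nr A1 y"
      unfolding C_eq mem_region_of_iff[OF normal_field0 y0] by blast
    also have "\<dots> \<longleftrightarrow> z \<in> level C (card (positive_sides nr A1 y))"
      unfolding level_def using same_card by blast
    finally show ?thesis .
  qed
  then show ?thesis
    by blast
qed

lemma exists_point_at_level:
  assumes C: "C \<in> regions A0" and j: "j \<le> card A1"
  obtains y where "y \<in> C - \<Union>(A0 \<union> A1)" and "card (positive_sides nr A1 y) = j"
proof -
  obtain p where p: "p \<in> C"
    using C in_components_nonempty unfolding regions_def by blast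
  then have p0: "p \<notin> \<Union>A0"
    using C in_components_subset unfolding regions_def by blast
  define c where "c H = - (nr H \<bullet> p)" for H
  have inj: "inj_on c A1"
  proof (rule inj_onI)
    fix H H' assume "H \<in> A1" "H' \<in> A1" "c H = c H'"
    then show "H = H'"
      using inner_normals_distinct[OF C p] unfolding c_def by (metis neg_equal_iff_equal)
  qed
  obtain t where t: "t \<notin> c ` A1" "card {s \<in> c ` A1. s < t} = j"
    using exists_threshold_count[of "c ` A1" j] finite card_image[OF inj] j by auto
  \<comment> \<open>the line \<open>p + t v\<close> stays in \<open>C\<close> and crosses each \<open>H \<in> A1\<close> once, at \<open>t = c H\<close>\<close>
  define y where "y = p + t *\<^sub>R v"
  have y0: "nr H \<bullet> y = nr H \<bullet> p" if "H \<in> A0" for H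
    using transversal0[OF that] unfolding y_def by (simp add: inner_add_right)
  have y1: "nr H \<bullet> y = t - c H" if "H \<in> A1" for H
    using transversal1[OF that] unfolding y_def c_def by (simp add: inner_add_right)
  have "nr H \<bullet> y \<noteq> 0" if "H \<in> A1" for H
    using y1[OF that] t(1) that by auto
  then have y_off1: "y \<notin> \<Union>A1"
    using notin_Union_iff[OF normal_field1] by blast
  have y_off0: "y \<notin> \<Union>A0"
    using y0 p0 unfolding notin_Union_iff[OF normal_field0] by simp
  moreover have "positive_sides nr A0 y = positive_sides nr A0 p"
    using y0 unfolding positive_sides_def by auto
  ultimately have "y \<in> C"
    using region_of_eq_if_mem[OF C p] mem_region_of_iff[OF normal_field0 p0] by blast
  have "c ` {H \<in> A1. c H < t} = {s \<in> c ` A1. s < t}"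
    by auto
  moreover have "inj_on c {H \<in> A1. c H < t}"
    using inj by (rule inj_on_subset) auto
  moreover have "positive_sides nr A1 y = {H \<in> A1. c H < t}"
    using y1 unfolding positive_sides_def by auto
  ultimately have "card (positive_sides nr A1 y) = j"
    using t(2) card_image by metis
  then show thesis
    using that \<open>y \<in> C\<close> y_off0 y_off1 by blast
qed

lemma regions_eq_levels:
  "regions (A0 \<union> A1) = {level C j | C j. C \<in> regions A0 \<and> j \<le> card A1}"
proof
  show "regions (A0 \<union> A1) \<subseteq> {level C j | C j. C \<in> regions A0 \<and> j \<le> card A1}"
  proof
    fix R assume "R \<in> regions (A0 \<union> A1)"
    then obtain y where y: "y \<notin> \<Union>(A0 \<union> A1)" "R = region_of (A0 \<union> A1) y"
      unfolding regions_eq_image_region_of by blast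
    then have "y \<in> region_of A0 y - \<Union>(A0 \<union> A1)" and C: "region_of A0 y \<in> regions A0"
      using region_of_self[of y A0] region_of_in_regions[of y A0] by auto
    moreover have "card (positive_sides nr A1 y) \<le> card A1"
      using finite unfolding positive_sides_def by (intro card_mono) auto
    ultimately show "R \<in> {level C j | C j. C \<in> regions A0 \<and> j \<le> card A1}"
      using region_of_eq_level y(2) by blast
  qed
next
  show "{level C j | C j. C \<in> regions A0 \<and> j \<le> card A1} \<subseteq> regions (A0 \<union> A1)"
  proof clarify
    fix C j assume C: "C \<in> regions A0" and "j \<le> card A1"
    then obtain y where "y \<in> C - \<Union>(A0 \<union> A1)" "card (positive_sides nr A1 y) = j"
      by (rule exists_point_at_level)
    then show "level C j \<in> regions (A0 \<union> A1)"
      using region_of_eq_level[OF C] region_of_in_regions by (metis DiffD2)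
  qed
qed

lemma level_inj:
  assumes C: "C \<in> regions A0" and C': "C' \<in> regions A0" and "j \<le> card A1"
    and eq: "level C j = level C' j'"
  shows "C = C' \<and> j = j'"
proof -
  obtain y where "y \<in> C - \<Union>(A0 \<union> A1)" "card (positive_sides nr A1 y) = j"
    using exists_point_at_level[OF C \<open>j \<le> card A1\<close>] by blast
  then have "y \<in> level C j"
    unfolding level_def by blast
  then have "y \<in> C" "y \<in> C'" "j = j'"
    using eq unfolding level_def by auto
  then show ?thesis
    using region_of_eq_if_mem[OF C] region_of_eq_if_mem[OF C'] by metis
qed

lemma region_adj_level_Suc:
  assumes C: "C \<in> regions A0" and j: "j < card A1"
  shows "region_adj (A0 \<union> A1) (level C j) (level C (Suc j))"
proof -
  obtain y where y: "y \<in> C - \<Union>(A0 \<union> A1)" "card (positive_sides nr A1 y) = j"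
    using exists_point_at_level[OF C] j by (metis less_imp_le)
  obtain z where z: "z \<in> C - \<Union>(A0 \<union> A1)" "card (positive_sides nr A1 z) = Suc j"
    using exists_point_at_level[OF C] j by (metis Suc_leI)
  have "region_of A0 y = region_of A0 z"
    using region_of_eq_if_mem[OF C] y z by blast
  then have "separating nr A0 y z = {}"
    using region_of_eq_iff[OF normal_field0] y z unfolding separating_eq_sym_diff by blast
  moreover have sub: "positive_sides nr A1 y \<subseteq> positive_sides nr A1 z"
    using positive_sides_subset_if_card_le[OF C] y z by simp
  then have "separating nr A1 y z = positive_sides nr A1 z - positive_sides nr A1 y"
    unfolding separating_eq_sym_diff by blast
  then have "card (separating nr A1 y z) = 1"
    using y(2) z(2) card_Diff_subset[OF finite_positive_sides sub] by simp
  ultimately have "card (separating nr (A0 \<union> A1) y z) = 1"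
    by (simp add: separating_Un)
  then show ?thesis
    using region_adj_region_of_iff[OF normal_field] region_of_eq_level[OF C] y z by (metis DiffD2)
qed

lemma region_adj_level_extreme:
  assumes C: "C \<in> regions A0" and C': "C' \<in> regions A0" and adj: "region_adj A0 C C'"
    and j: "j = 0 \<or> j = card A1"
  shows "region_adj (A0 \<union> A1) (level C j) (level C' j)"
proof -
  obtain y where y: "y \<in> C - \<Union>(A0 \<union> A1)" "card (positive_sides nr A1 y) = j"
    using exists_point_at_level[OF C] j by auto
  obtain z where z: "z \<in> C' - \<Union>(A0 \<union> A1)" "card (positive_sides nr A1 z) = j"
    using exists_point_at_level[OF C'] j by auto
  have "positive_sides nr A1 y = positive_sides nr A1 z"
  proof (cases "j = 0")
    case True
    then show ?thesis
      using y(2) z(2) finite_positive_sides by simp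
  next
    case False
    then have "card (positive_sides nr A1 w) = card A1 \<Longrightarrow> positive_sides nr A1 w = A1" for w
      using card_subset_eq[OF finite positive_sides_subset] by blast
    then show ?thesis
      using False j y(2) z(2) by metis
  qed
  then have "separating nr A1 y z = {}"
    unfolding separating_eq_sym_diff by simp
  moreover have "card (separating nr A0 y z) = 1"
    using adj region_adj_region_of_iff[OF normal_field0] region_of_eq_if_mem[OF C] region_of_eq_if_mem[OF C'] y z
    by (metis DiffD1 DiffD2 UnCI Union_Un_distrib)
  ultimately have "card (separating nr (A0 \<union> A1) y z) = 1"
    by (simp add: separating_Un)
  then show ?thesis
    using region_adj_region_of_iff[OF normal_field] region_of_eq_level C C' y z by (metis DiffD2)
qed

lemma even_tour_snake:
  assumes tour: "even_tour A0 cs0"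
  shows "even_tour (A0 \<union> A1) (snake cs0 (card A1) level)"
proof -
  have cs0: "distinct cs0" "set cs0 = regions A0" "even (length cs0)" "cyclic_path (region_adj A0) cs0"
    using tour unfolding even_tour_def by auto
  have "distinct (snake cs0 (card A1) level)"
    using cs0 level_inj by (intro distinct_snake) auto
  moreover have "set (snake cs0 (card A1) level) = regions (A0 \<union> A1)"
    unfolding set_snake regions_eq_levels cs0(2) ..
  moreover have "cyclic_path (region_adj (A0 \<union> A1)) (snake cs0 (card A1) level)"
  proof (rule cyclic_path_snake[OF cs0(4) cs0(3)])
    fix C j assume "C \<in> set cs0" "j < card A1"
    then show "region_adj (A0 \<union> A1) (level C j) (level C (Suc j)) \<and>
        region_adj (A0 \<union> A1) (level C (Suc j)) (level C j)"
      using region_adj_level_Suc region_adj_sym cs0(2) by blast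
  next
    fix C C' j assume "C \<in> set cs0" "C' \<in> set cs0" "region_adj A0 C C'" "j = 0 \<or> j = card A1"
    then show "region_adj (A0 \<union> A1) (level C j) (level C' j)"
      using region_adj_level_extreme cs0(2) by blast
  qed
  ultimately show ?thesis
    using cs0(3) unfolding even_tour_def length_snake by simp
qed

end

lemma even_tour_extension:
  assumes nr: "normal_field nr (A0 \<union> A1)" and "finite A1" and disjoint: "A0 \<inter> A1 = {}"
    and modular: "\<forall>H\<in>A1. \<forall>H'\<in>A1. H \<noteq> H' \<longrightarrow> (\<exists>H0\<in>A0. H \<inter> H' \<subseteq> H0)"
    and rank: "arr_rank A0 < arr_rank (A0 \<union> A1)"
    and tour: "even_tour A0 cs0"
  obtains cs where "even_tour (A0 \<union> A1) cs" and "length cs = length cs0 * Suc (card A1)"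
proof -
  obtain v where v0: "\<forall>H\<in>A0. nr H \<bullet> v = 0" and v1: "\<forall>H\<in>A1. nr H \<bullet> v \<noteq> 0"
    using exists_transversal[OF nr disjoint modular rank] by blast
  define nr' where "nr' H = (if H \<in> A1 then inverse (nr H \<bullet> v) else 1) *\<^sub>R nr H" for H
  have "normal_field nr' (A0 \<union> A1)"
    unfolding nr'_def using v1 by (intro normal_field_scaleR[OF nr]) auto
  moreover have "\<forall>H\<in>A0. nr' H \<bullet> v = 0" and "\<forall>H\<in>A1. nr' H \<bullet> v = 1"
    unfolding nr'_def using v0 v1 disjoint by auto
  ultimately interpret modular_extension nr' A0 A1 v
    using \<open>finite A1\<close> disjoint modular by unfold_locales auto
  show thesis
    using that even_tour_snake[OF tour] length_snake by blast
qed

section \<open>Supersolvable arrangements\<close>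

lemma rank_two_even_tour:
  assumes arr: "arrangement A" and rank: "arr_rank A = 2"
  shows "\<exists>cs. even_tour A cs \<and> 4 \<le> length cs"
proof -
  obtain nr where nr: "normal_field nr A"
    using arrangement_normal_field[OF arr] by blast
  then obtain H0 where H0: "H0 \<in> A"
    using rank arr_rank_eq_dim_normals[OF nr] by fastforce
  define A1 where "A1 = A - {H0}"
  have A: "A = {H0} \<union> A1"
    using H0 unfolding A1_def by blast
  have nr0: "normal_field nr {H0}"
    using normal_field_subset[OF nr] H0 by blast
  have rank0: "arr_rank {H0} = 1"
    using nr0 arr_rank_eq_dim_normals[OF nr0] unfolding normal_field_def by simp
  have fin: "finite A1"
    using arr unfolding A1_def arrangement_def by simp
  have "A1 \<noteq> {}"
    using rank rank0 A by force
  with fin have "0 < card A1"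
    by (simp add: card_gt_0_iff)
  have modular: "\<forall>H\<in>A1. \<forall>H'\<in>A1. H \<noteq> H' \<longrightarrow> (\<exists>H0'\<in>{H0}. H \<inter> H' \<subseteq> H0')"
    using rank_two_modular[OF nr rank H0] unfolding A1_def by blast
  have disjoint: "{H0} \<inter> A1 = {}" and rank_less: "arr_rank {H0} < arr_rank ({H0} \<union> A1)"
    using rank rank0 A unfolding A1_def by auto
  obtain cs where "even_tour ({H0} \<union> A1) cs"
    and "length cs = length [region_of {H0} (nr H0), region_of {H0} (- nr H0)] * Suc (card A1)"
    by (rule even_tour_extension[OF nr[unfolded A] fin disjoint modular rank_less
          hyperplane_even_tour[OF nr0]])
  with \<open>0 < card A1\<close> show ?thesis
    using A by auto
qed

lemma supersolvable_even_tour: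
  assumes "supersolvable A" and "2 \<le> arr_rank A"
  shows "\<exists>cs. even_tour A cs \<and> 4 \<le> length cs"
  using assms
proof (induction A rule: supersolvable.induct)
  case (base A)
  then show ?case
    using rank_two_even_tour by simp
next
  case (step A A0 A1)
  have "2 \<le> arr_rank A0"
    using step.hyps(2,8) by simp
  then obtain cs0 where tour0: "even_tour A0 cs0" and "4 \<le> length cs0"
    using step.IH by blast
  obtain nr where nr: "normal_field nr (A0 \<union> A1)"
    using arrangement_normal_field step.hyps(1,3) by metis
  have fin: "finite A1"
    using step.hyps(1,3) unfolding arrangement_def by simp
  have rank_less: "arr_rank A0 < arr_rank (A0 \<union> A1)"
    using step.hyps(2,3,8) by simp
  obtain cs where "even_tour (A0 \<union> A1) cs" and "length cs = length cs0 * Suc (card A1)"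
    by (rule even_tour_extension[OF nr fin step.hyps(4) step.hyps(9) rank_less tour0])
  with \<open>4 \<le> length cs0\<close> show ?case
    using step.hyps(3) by (auto intro: order.trans)
qed

theorem theorem1p1:
  fixes \<A> :: "'a::euclidean_space set set"
  assumes "arrangement \<A>" and "supersolvable \<A>" and "arr_rank \<A> \<ge> 2"
  shows "\<exists>cs. hamiltonian_cycle \<A> cs \<and> even (length cs)"
proof -
  obtain cs where "even_tour \<A> cs" and "4 \<le> length cs"
    using supersolvable_even_tour[OF assms(2,3)] by blast
  then show ?thesis
    unfolding even_tour_def cyclic_path_def hamiltonian_cycle_def by auto
qed

end
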